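(* Let $(A,B)$ be an imprecise copula and define sequences by $A^0=A$, $B^0=B$ and, for $n\ge0$, $B^{n+1}=(A^n)_M$, $A^{n+1}=(B^{n+1})_O$. Then: (a) $(A^n)$ is pointwise nondecreasing, $(B^n)$ is pointwise nonincreasing, and both converge uniformly on $[0,1]^2$; denote the limits $\breve A$ and $\breve B$. (b) For each $n\ge1$, $(A^n,B^n)$ is an imprecise copula with $A^{n-1}\le A^n\le B^n\le B^{n-1}$. (c) $(\breve A,\breve B)$ is an imprecise copula with $A^n\le\breve A\le\breve B\le B^n$ for all $n$, and $(\breve A)_M=\breve B$, $(\breve B)_O=\breve A$.
   Context: Quasi-copula: $Q:[0,1]^2\to\mathbb{R}$ grounded ($Q(x,0)=Q(0,y)=0$), with neutral element $1$ ($Q(x,1)=x,Q(1,y)=y$), with $V_Q(R)\ge0$ for each rectangle having a side on the boundary of $[0,1]^2$, where $V_Q([s_1,s_2]\times[t_1,t_2])=Q(s_1,t_1)+Q(s_2,t_2)-Q(s_2,t_1)-Q(s_1,t_2)$. Defects: $\mathcal{R}_\nearrow(\mathbf{x}),\mathcal{R}_\swarrow(\mathbf{x}),\mathcal{R}_\nwarrow(\mathbf{x}),\mathcal{R}_\searrow(\mathbf{x})$ are the sets of (possibly degenerate) rectangles in $[0,1]^2$ with $\mathbf{x}$ as southwest, northeast, southeast, northwest corner; $D^Q_\bullet(\mathbf{x})=\inf\{V_Q(R):R\in\mathcal{R}_\bullet(\mathbf{x})\}$; $D^Q_M=\min(D^Q_\nearrow,D^Q_\swarrow)$, $D^Q_O=\min(D^Q_\nwarrow,D^Q_\searrow)$;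 $Q_M=Q-D^Q_M$, $Q_O=Q+D^Q_O$. Imprecise copula: a pair $(A,B)$ of grounded functions with neutral element 1 satisfying, for all rectangles with SW, SE, NE, NW corners $\mathbf{a},\mathbf{b},\mathbf{c},\mathbf{d}$: $A(\mathbf{a})+B(\mathbf{c})-A(\mathbf{b})-A(\mathbf{d})\ge0$, $B(\mathbf{a})+A(\mathbf{c})-A(\mathbf{b})-A(\mathbf{d})\ge0$, $B(\mathbf{a})+B(\mathbf{c})-B(\mathbf{b})-A(\mathbf{d})\ge0$, $B(\mathbf{a})+B(\mathbf{c})-A(\mathbf{b})-B(\mathbf{d})\ge0$. *)

theory Defs
  imports "HOL-Analysis.Analysis"
begin

text \<open>Functions on the unit square are represented as functions on pairs of reals;
only their values on the unit square are relevant.\<close>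

type_synonym sqfun = "real \<times> real \<Rightarrow> real"

definition unit_sq :: "(real \<times> real) set" where
  "unit_sq = {0..1} \<times> {0..1}"

definition vol :: "sqfun \<Rightarrow> real \<Rightarrow> real \<Rightarrow> real \<Rightarrow> real \<Rightarrow> real" where
  "vol Q s1 s2 t1 t2 = Q (s1, t1) + Q (s2, t2) - Q (s2, t1) - Q (s1, t2)"

text \<open>Defects. x is the SW / NE / SE / NW corner of the (possibly degenerate) rectangle.\<close>
definition defect_NE :: "sqfun \<Rightarrow> real \<times> real \<Rightarrow> real" where
  "defect_NE Q x = Inf {vol Q (fst x) s2 (snd x) t2 | s2 t2.
      fst x \<le> s2 \<and> s2 \<le> 1 \<and> snd x \<le> t2 \<and> t2 \<le> 1}"

definition defect_SW :: "sqfun \<Rightarrow> real \<times> real \<Rightarrow> real" where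
  "defect_SW Q x = Inf {vol Q s1 (fst x) t1 (snd x) | s1 t1.
      0 \<le> s1 \<and> s1 \<le> fst x \<and> 0 \<le> t1 \<and> t1 \<le> snd x}"

definition defect_NW :: "sqfun \<Rightarrow> real \<times> real \<Rightarrow> real" where
  "defect_NW Q x = Inf {vol Q s1 (fst x) (snd x) t2 | s1 t2.
      0 \<le> s1 \<and> s1 \<le> fst x \<and> snd x \<le> t2 \<and> t2 \<le> 1}"

definition defect_SE :: "sqfun \<Rightarrow> real \<times> real \<Rightarrow> real" where
  "defect_SE Q x = Inf {vol Q (fst x) s2 t1 (snd x) | s2 t1.
      fst x \<le> s2 \<and> s2 \<le> 1 \<and> 0 \<le> t1 \<and> t1 \<le> snd x}"

definition defect_M :: "sqfun \<Rightarrow> real \<times> real \<Rightarrow> real" where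
  "defect_M Q x = min (defect_NE Q x) (defect_SW Q x)"

definition defect_O :: "sqfun \<Rightarrow> real \<times> real \<Rightarrow> real" where
  "defect_O Q x = min (defect_NW Q x) (defect_SE Q x)"

definition M_op :: "sqfun \<Rightarrow> sqfun" where
  "M_op Q x = Q x - defect_M Q x"

definition O_op :: "sqfun \<Rightarrow> sqfun" where
  "O_op Q x = Q x + defect_O Q x"

definition grounded :: "sqfun \<Rightarrow> bool" where
  "grounded Q \<longleftrightarrow> (\<forall>x\<in>{0..1}. Q (x, 0) = 0) \<and> (\<forall>y\<in>{0..1}. Q (0, y) = 0)"

definition neutral1 :: "sqfun \<Rightarrow> bool" where
  "neutral1 Q \<longleftrightarrow> (\<forall>x\<in>{0..1}. Q (x, 1) = x) \<and> (\<forall>y\<in>{0..1}. Q (1, y) = y)"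

text \<open>Imprecise copula; the rectangle [s1,s2] x [t1,t2] has corners
 a = (s1,t1) (SW), b = (s2,t1) (SE), c = (s2,t2) (NE), d = (s1,t2) (NW).\<close>
definition imprecise_copula :: "sqfun \<Rightarrow> sqfun \<Rightarrow> bool" where
  "imprecise_copula A B \<longleftrightarrow> grounded A \<and> grounded B \<and> neutral1 A \<and> neutral1 B \<and>
    (\<forall>s1 s2 t1 t2. 0 \<le> s1 \<and> s1 \<le> s2 \<and> s2 \<le> 1 \<and> 0 \<le> t1 \<and> t1 \<le> t2 \<and> t2 \<le> 1 \<longrightarrow>
      A (s1, t1) + B (s2, t2) - A (s2, t1) - A (s1, t2) \<ge> 0 \<and>
      B (s1, t1) + A (s2, t2) - A (s2, t1) - A (s1, t2) \<ge> 0 \<and>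
      B (s1, t1) + B (s2, t2) - B (s2, t1) - A (s1, t2) \<ge> 0 \<and>
      B (s1, t1) + B (s2, t2) - A (s2, t1) - B (s1, t2) \<ge> 0)"

primrec iterAB :: "sqfun \<Rightarrow> sqfun \<Rightarrow> nat \<Rightarrow> sqfun \<times> sqfun" where
  "iterAB A B 0 = (A, B)"
| "iterAB A B (Suc n) = (let B' = M_op (fst (iterAB A B n)) in (O_op B', B'))"

definition seqA :: "sqfun \<Rightarrow> sqfun \<Rightarrow> nat \<Rightarrow> sqfun" where
  "seqA A B n = fst (iterAB A B n)"

definition seqB :: "sqfun \<Rightarrow> sqfun \<Rightarrow> nat \<Rightarrow> sqfun" where
  "seqB A B n = snd (iterAB A B n)"

end

theory Submission
  imports Defs
begin

text \<open>
  For a point x and a point p that is concordant with x (north-east or south-west of it), the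
  A-cross towards p is A x minus the A-volume of the rectangle spanned by x and p.  The
  imprecise-copula conditions say precisely that these crosses never exceed B x, and that the
  B-crosses towards discordant points are never below A x.  Since A_M x is the supremum of the
  concordant A-crosses and B_O x the infimum of the discordant B-crosses, one gets
  A \<le> A_M \<le> B and A \<le> B_O \<le> B; moreover a cross towards a point concordant with y splits at a
  mixed corner of x and y into two concordant crosses, which shows that (A, A_M) and (B_O, B)
  are again imprecise copulas.  So the iterates form a monotone squeezed pair of sequences and
  converge pointwise.  All members are 1-Lipschitz in each variable, which makes the
  convergence uniform on the compact square; the limit pair is an imprecise copula, and since
  a uniform perturbation by e moves every cross by at most 3e, the operators pass to the limit
  and give the fixed-point equations.
\<close>

section \<open>Crosses and the operators M and O\<close>

definition cross :: "sqfun \<Rightarrow> real \<times> real \<Rightarrow> real \<times> real \<Rightarrow> real" where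
  "cross Q x p = Q (fst p, snd x) + Q (fst x, snd p) - Q p"

definition concordant :: "real \<times> real \<Rightarrow> real \<times> real \<Rightarrow> bool" where
  "concordant x p \<longleftrightarrow> (fst x \<le> fst p \<and> snd x \<le> snd p) \<or> (fst p \<le> fst x \<and> snd p \<le> snd x)"

definition discordant :: "real \<times> real \<Rightarrow> real \<times> real \<Rightarrow> bool" where
  "discordant x p \<longleftrightarrow> (fst x \<le> fst p \<and> snd p \<le> snd x) \<or> (fst p \<le> fst x \<and> snd x \<le> snd p)"

definition conc_cross_le :: "sqfun \<Rightarrow> sqfun \<Rightarrow> bool" where
  "conc_cross_le A B \<longleftrightarrow>
    (\<forall>x\<in>unit_sq. \<forall>p\<in>unit_sq. concordant x p \<longrightarrow> cross A x p \<le> B x)"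

definition disc_cross_ge :: "sqfun \<Rightarrow> sqfun \<Rightarrow> bool" where
  "disc_cross_ge B A \<longleftrightarrow>
    (\<forall>x\<in>unit_sq. \<forall>p\<in>unit_sq. discordant x p \<longrightarrow> A x \<le> cross B x p)"

lemma mem_unit_sq: "x \<in> unit_sq \<longleftrightarrow> fst x \<in> {0..1} \<and> snd x \<in> {0..1}"
  by (cases x) (simp add: unit_sq_def)

lemma cross_self [simp]: "cross Q x x = Q x"
  by (simp add: cross_def)

lemma concordant_self [simp]: "concordant x x" and discordant_self [simp]: "discordant x x"
  by (auto simp: concordant_def discordant_def)

lemma setcompr_pair_eq_image: "{f s t | s t. P s t} = (\<lambda>p. f (fst p) (snd p)) ` {p. P (fst p) (snd p)}"
  by (auto simp: image_iff) metis

lemma defect_M_eq_Inf: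
  assumes x: "x \<in> unit_sq"
    and bound: "\<And>p. p \<in> unit_sq \<Longrightarrow> concordant x p \<Longrightarrow> cross Q x p \<le> b"
  shows "defect_M Q x = Inf ((\<lambda>p. Q x - cross Q x p) ` {p \<in> unit_sq. concordant x p})"
proof -
  let ?d = "\<lambda>p. Q x - cross Q x p"
  let ?NE = "{p \<in> unit_sq. fst x \<le> fst p \<and> snd x \<le> snd p}"
  let ?SW = "{p \<in> unit_sq. fst p \<le> fst x \<and> snd p \<le> snd x}"
  have NE: "{vol Q (fst x) s2 (snd x) t2 | s2 t2. fst x \<le> s2 \<and> s2 \<le> 1 \<and> snd x \<le> t2 \<and> t2 \<le> 1}
      = ?d ` ?NE"
    using x unfolding setcompr_pair_eq_image
    by (intro image_cong) (auto simp: mem_unit_sq vol_def cross_def)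
  have SW: "{vol Q s1 (fst x) t1 (snd x) | s1 t1. 0 \<le> s1 \<and> s1 \<le> fst x \<and> 0 \<le> t1 \<and> t1 \<le> snd x}
      = ?d ` ?SW"
    using x unfolding setcompr_pair_eq_image
    by (intro image_cong) (auto simp: mem_unit_sq vol_def cross_def)
  have split: "{p \<in> unit_sq. concordant x p} = ?NE \<union> ?SW"
    by (auto simp: concordant_def)
  have ne: "?NE \<noteq> {}" "?SW \<noteq> {}"
    using x by blast+
  have bdd: "bdd_below (?d ` S)" if "S \<subseteq> {p \<in> unit_sq. concordant x p}" for S
    using that bound by (intro bdd_belowI2[where m = "Q x - b"]) force
  show ?thesis
    unfolding defect_M_def defect_NE_def defect_SW_def NE SW split image_Un
    using ne by (subst cInf_union_distrib) (auto simp: inf_min concordant_def intro!: bdd)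
qed

lemma defect_O_eq_Inf:
  assumes x: "x \<in> unit_sq"
    and bound: "\<And>p. p \<in> unit_sq \<Longrightarrow> discordant x p \<Longrightarrow> b \<le> cross Q x p"
  shows "defect_O Q x = Inf ((\<lambda>p. cross Q x p - Q x) ` {p \<in> unit_sq. discordant x p})"
proof -
  let ?d = "\<lambda>p. cross Q x p - Q x"
  let ?NW = "{p \<in> unit_sq. fst p \<le> fst x \<and> snd x \<le> snd p}"
  let ?SE = "{p \<in> unit_sq. fst x \<le> fst p \<and> snd p \<le> snd x}"
  have NW: "{vol Q s1 (fst x) (snd x) t2 | s1 t2. 0 \<le> s1 \<and> s1 \<le> fst x \<and> snd x \<le> t2 \<and> t2 \<le> 1}
      = ?d ` ?NW"
    using x unfolding setcompr_pair_eq_image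
    by (intro image_cong) (auto simp: mem_unit_sq vol_def cross_def)
  have SE: "{vol Q (fst x) s2 t1 (snd x) | s2 t1. fst x \<le> s2 \<and> s2 \<le> 1 \<and> 0 \<le> t1 \<and> t1 \<le> snd x}
      = ?d ` ?SE"
    using x unfolding setcompr_pair_eq_image
    by (intro image_cong) (auto simp: mem_unit_sq vol_def cross_def)
  have split: "{p \<in> unit_sq. discordant x p} = ?NW \<union> ?SE"
    by (auto simp: discordant_def)
  have ne: "?NW \<noteq> {}" "?SE \<noteq> {}"
    using x by blast+
  have bdd: "bdd_below (?d ` S)" if "S \<subseteq> {p \<in> unit_sq. discordant x p}" for S
    using that bound by (intro bdd_belowI2[where m = "b - Q x"]) force
  show ?thesis
    unfolding defect_O_def defect_NW_def defect_SE_def NW SE split image_Un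
    using ne by (subst cInf_union_distrib) (auto simp: inf_min discordant_def intro!: bdd)
qed

lemma cross_le_M_op:
  assumes "x \<in> unit_sq" "p \<in> unit_sq" "concordant x p"
    and "\<And>q. q \<in> unit_sq \<Longrightarrow> concordant x q \<Longrightarrow> cross Q x q \<le> b"
  shows "cross Q x p \<le> M_op Q x"
proof -
  have "defect_M Q x \<le> Q x - cross Q x p"
    using assms by (subst defect_M_eq_Inf[where b = b])
      (auto intro!: cInf_lower bdd_belowI2[where m = "Q x - b"])
  then show ?thesis
    by (simp add: M_op_def)
qed

lemma M_op_le:
  assumes "x \<in> unit_sq" "\<And>p. p \<in> unit_sq \<Longrightarrow> concordant x p \<Longrightarrow> cross Q x p \<le> b"
  shows "M_op Q x \<le> b"
proof -
  have "x \<in> {p \<in> unit_sq. concordant x p}"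
    using assms(1) by simp
  then have "Q x - b \<le> defect_M Q x"
    using assms by (subst defect_M_eq_Inf[where b = b]) (auto intro!: cInf_greatest)
  then show ?thesis
    by (simp add: M_op_def)
qed

lemma O_op_le_cross:
  assumes "x \<in> unit_sq" "p \<in> unit_sq" "discordant x p"
    and "\<And>q. q \<in> unit_sq \<Longrightarrow> discordant x q \<Longrightarrow> b \<le> cross Q x q"
  shows "O_op Q x \<le> cross Q x p"
proof -
  have "defect_O Q x \<le> cross Q x p - Q x"
    using assms by (subst defect_O_eq_Inf[where b = b])
      (auto intro!: cInf_lower bdd_belowI2[where m = "b - Q x"])
  then show ?thesis
    by (simp add: O_op_def)
qed

lemma le_O_op:
  assumes "x \<in> unit_sq" "\<And>p. p \<in> unit_sq \<Longrightarrow> discordant x p \<Longrightarrow> b \<le> cross Q x p"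
  shows "b \<le> O_op Q x"
proof -
  have "x \<in> {p \<in> unit_sq. discordant x p}"
    using assms(1) by simp
  then have "b - Q x \<le> defect_O Q x"
    using assms by (subst defect_O_eq_Inf[where b = b]) (auto intro!: cInf_greatest)
  then show ?thesis
    by (simp add: O_op_def)
qed

lemma conc_cross_le_M_op_bounds:
  assumes "conc_cross_le A B" "x \<in> unit_sq"
  shows "A x \<le> M_op A x" "M_op A x \<le> B x"
proof -
  have bound: "\<And>p. p \<in> unit_sq \<Longrightarrow> concordant x p \<Longrightarrow> cross A x p \<le> B x"
    using assms unfolding conc_cross_le_def by blast
  show "A x \<le> M_op A x"
    using cross_le_M_op[OF assms(2,2) concordant_self bound] by simp
  show "M_op A x \<le> B x"
    by (rule M_op_le[OF assms(2) bound])
qed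

lemma disc_cross_ge_O_op_bounds:
  assumes "disc_cross_ge B A" "x \<in> unit_sq"
  shows "A x \<le> O_op B x" "O_op B x \<le> B x"
proof -
  have bound: "\<And>p. p \<in> unit_sq \<Longrightarrow> discordant x p \<Longrightarrow> A x \<le> cross B x p"
    using assms unfolding disc_cross_ge_def by blast
  show "A x \<le> O_op B x"
    by (rule le_O_op[OF assms(2) bound])
  show "O_op B x \<le> B x"
    using O_op_le_cross[OF assms(2,2) discordant_self bound] by simp
qed

lemma conc_cross_le_M_op:
  assumes "conc_cross_le A B"
  shows "conc_cross_le A (M_op A)"
  using assms unfolding conc_cross_le_def by (blast intro: cross_le_M_op)

lemma disc_cross_ge_O_op:
  assumes "disc_cross_ge B A"
  shows "disc_cross_ge B (O_op B)"
  using assms unfolding disc_cross_ge_def by (blast intro: O_op_le_cross)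

lemma imprecise_copula_iff_cross:
  "imprecise_copula A B \<longleftrightarrow> grounded A \<and> grounded B \<and> neutral1 A \<and> neutral1 B \<and>
     conc_cross_le A B \<and> disc_cross_ge B A"
proof -
  have rectangle: "(A (s1, t1) + B (s2, t2) - A (s2, t1) - A (s1, t2) \<ge> 0 \<and>
      B (s1, t1) + A (s2, t2) - A (s2, t1) - A (s1, t2) \<ge> 0 \<and>
      B (s1, t1) + B (s2, t2) - B (s2, t1) - A (s1, t2) \<ge> 0 \<and>
      B (s1, t1) + B (s2, t2) - A (s2, t1) - B (s1, t2) \<ge> 0) \<longleftrightarrow>
    cross A (s2, t2) (s1, t1) \<le> B (s2, t2) \<and> cross A (s1, t1) (s2, t2) \<le> B (s1, t1) \<and>
    A (s1, t2) \<le> cross B (s1, t2) (s2, t1) \<and> A (s2, t1) \<le> cross B (s2, t1) (s1, t2)"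
    for s1 s2 t1 t2
    by (auto simp: cross_def)
  have "conc_cross_le A B \<and> disc_cross_ge B A \<longleftrightarrow>
    (\<forall>s1 s2 t1 t2. 0 \<le> s1 \<and> s1 \<le> s2 \<and> s2 \<le> 1 \<and> 0 \<le> t1 \<and> t1 \<le> t2 \<and> t2 \<le> 1 \<longrightarrow>
      cross A (s2, t2) (s1, t1) \<le> B (s2, t2) \<and> cross A (s1, t1) (s2, t2) \<le> B (s1, t1) \<and>
      A (s1, t2) \<le> cross B (s1, t2) (s2, t1) \<and> A (s2, t1) \<le> cross B (s2, t1) (s1, t2))"
    unfolding conc_cross_le_def disc_cross_ge_def concordant_def discordant_def
    by (auto simp: mem_unit_sq)
  then show ?thesis
    unfolding imprecise_copula_def rectangle by blast
qed

lemma imprecise_copula_le: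
  assumes "imprecise_copula A B" "x \<in> unit_sq"
  shows "A x \<le> B x"
  using assms cross_self[of A x] concordant_self[of x]
  unfolding imprecise_copula_iff_cross conc_cross_le_def by metis

lemma disc_cross_ge_M_op:
  assumes "conc_cross_le A B"
  shows "disc_cross_ge (M_op A) A"
  unfolding disc_cross_ge_def
proof (intro ballI impI)
  fix x y assume x: "x \<in> unit_sq" and y: "y \<in> unit_sq" and xy: "discordant x y"
  obtain x1 x2 y1 y2 where xy_eq: "x = (x1, x2)" "y = (y1, y2)"
    by fastforce
  have C: "cross A z p \<le> M_op A z" if "z \<in> unit_sq" "p \<in> unit_sq" "concordant z p" for z p
    using conc_cross_le_M_op[OF assms] that unfolding conc_cross_le_def by blast
  have "M_op A y \<le> M_op A (y1, x2) + M_op A (x1, y2) - A x"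
  proof (rule M_op_le[OF y])
    fix u assume u: "u \<in> unit_sq" "concordant y u"
    obtain u1 u2 where u_eq: "u = (u1, u2)"
      by fastforce
    \<comment> \<open>cross A y u splits, at one of the mixed corners (x1, y2) and (y1, x2), into two
      crosses minus A x; one of the two splittings makes both crosses concordant\<close>
    have "concordant (x1, y2) (u1, x2) \<and> concordant (y1, x2) u \<or>
        concordant (y1, x2) (x1, u2) \<and> concordant (x1, y2) u"
      using xy u(2) unfolding concordant_def discordant_def xy_eq u_eq by auto
    then show "cross A y u \<le> M_op A (y1, x2) + M_op A (x1, y2) - A x"
    proof
      assume "concordant (x1, y2) (u1, x2) \<and> concordant (y1, x2) u"
      then show ?thesis
        using C[of "(x1, y2)" "(u1, x2)"] C[of "(y1, x2)" u] x y u
        by (auto simp: cross_def mem_unit_sq xy_eq u_eq)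
    next
      assume "concordant (y1, x2) (x1, u2) \<and> concordant (x1, y2) u"
      then show ?thesis
        using C[of "(y1, x2)" "(x1, u2)"] C[of "(x1, y2)" u] x y u
        by (auto simp: cross_def mem_unit_sq xy_eq u_eq)
    qed
  qed
  then show "A x \<le> cross (M_op A) x y"
    by (simp add: cross_def xy_eq)
qed

lemma conc_cross_le_O_op:
  assumes "disc_cross_ge B A"
  shows "conc_cross_le (O_op B) B"
  unfolding conc_cross_le_def
proof (intro ballI impI)
  fix x y assume x: "x \<in> unit_sq" and y: "y \<in> unit_sq" and xy: "concordant x y"
  obtain x1 x2 y1 y2 where xy_eq: "x = (x1, x2)" "y = (y1, y2)"
    by fastforce
  have D: "O_op B z \<le> cross B z p" if "z \<in> unit_sq" "p \<in> unit_sq" "discordant z p" for z p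
    using disc_cross_ge_O_op[OF assms] that unfolding disc_cross_ge_def by blast
  have "O_op B (y1, x2) + O_op B (x1, y2) - B x \<le> O_op B y"
  proof (rule le_O_op[OF y])
    fix u assume u: "u \<in> unit_sq" "discordant y u"
    obtain u1 u2 where u_eq: "u = (u1, u2)"
      by fastforce
    have "discordant (x1, y2) (u1, x2) \<and> discordant (y1, x2) u \<or>
        discordant (y1, x2) (x1, u2) \<and> discordant (x1, y2) u"
      using xy u(2) unfolding concordant_def discordant_def xy_eq u_eq by auto
    then show "O_op B (y1, x2) + O_op B (x1, y2) - B x \<le> cross B y u"
    proof
      assume "discordant (x1, y2) (u1, x2) \<and> discordant (y1, x2) u"
      then show ?thesis
        using D[of "(x1, y2)" "(u1, x2)"] D[of "(y1, x2)" u] x y u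
        by (auto simp: cross_def mem_unit_sq xy_eq u_eq)
    next
      assume "discordant (y1, x2) (x1, u2) \<and> discordant (x1, y2) u"
      then show ?thesis
        using D[of "(y1, x2)" "(x1, u2)"] D[of "(x1, y2)" u] x y u
        by (auto simp: cross_def mem_unit_sq xy_eq u_eq)
    qed
  qed
  then show "cross (O_op B) x y \<le> B x"
    by (simp add: cross_def xy_eq)
qed

lemma grounded_between:
  assumes "grounded A" "grounded B" "\<And>x. x \<in> unit_sq \<Longrightarrow> A x \<le> C x \<and> C x \<le> B x"
  shows "grounded C"
  using assms unfolding grounded_def by (smt (verit) atLeastAtMost_iff mem_unit_sq fst_conv snd_conv)

lemma neutral1_between:
  assumes "neutral1 A" "neutral1 B" "\<And>x. x \<in> unit_sq \<Longrightarrow> A x \<le> C x \<and> C x \<le> B x"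
  shows "neutral1 C"
  using assms unfolding neutral1_def by (smt (verit) atLeastAtMost_iff mem_unit_sq fst_conv snd_conv)

lemma imprecise_copula_M_op:
  assumes "imprecise_copula A B"
  shows "imprecise_copula A (M_op A)"
proof -
  have AB: "grounded A" "grounded B" "neutral1 A" "neutral1 B" "conc_cross_le A B"
    using assms by (simp_all add: imprecise_copula_iff_cross)
  have "A x \<le> M_op A x \<and> M_op A x \<le> B x" if "x \<in> unit_sq" for x
    using conc_cross_le_M_op_bounds[OF AB(5) that] by simp
  then show ?thesis
    unfolding imprecise_copula_iff_cross
    using AB grounded_between[OF AB(1,2)] neutral1_between[OF AB(3,4)]
      conc_cross_le_M_op[OF AB(5)] disc_cross_ge_M_op[OF AB(5)] by blast
qed

lemma imprecise_copula_O_op: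
  assumes "imprecise_copula A B"
  shows "imprecise_copula (O_op B) B"
proof -
  have AB: "grounded A" "grounded B" "neutral1 A" "neutral1 B" "disc_cross_ge B A"
    using assms by (simp_all add: imprecise_copula_iff_cross)
  have "A x \<le> O_op B x \<and> O_op B x \<le> B x" if "x \<in> unit_sq" for x
    using disc_cross_ge_O_op_bounds[OF AB(5) that] by simp
  then show ?thesis
    unfolding imprecise_copula_iff_cross
    using AB grounded_between[OF AB(1,2)] neutral1_between[OF AB(3,4)]
      disc_cross_ge_O_op[OF AB(5)] conc_cross_le_O_op[OF AB(5)] by blast
qed

section \<open>Lipschitz continuity and limits\<close>

lemma imprecise_copula_increments:
  assumes "imprecise_copula A B" "F \<in> {A, B}"
    and "s \<in> {0..1}" "s' \<in> {0..1}" "s \<le> s'" "t \<in> {0..1}"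
  shows "0 \<le> F (s', t) - F (s, t) \<and> F (s', t) - F (s, t) \<le> s' - s"
    and "0 \<le> F (t, s') - F (t, s) \<and> F (t, s') - F (t, s) \<le> s' - s"
proof -
  have rect: "\<And>s1 s2 t1 t2. 0 \<le> s1 \<Longrightarrow> s1 \<le> s2 \<Longrightarrow> s2 \<le> 1 \<Longrightarrow> 0 \<le> t1 \<Longrightarrow> t1 \<le> t2 \<Longrightarrow> t2 \<le> 1 \<Longrightarrow>
      A (s1, t1) + B (s2, t2) - A (s2, t1) - A (s1, t2) \<ge> 0 \<and>
      B (s1, t1) + A (s2, t2) - A (s2, t1) - A (s1, t2) \<ge> 0 \<and>
      B (s1, t1) + B (s2, t2) - B (s2, t1) - A (s1, t2) \<ge> 0 \<and>
      B (s1, t1) + B (s2, t2) - A (s2, t1) - B (s1, t2) \<ge> 0"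
    using assms(1) unfolding imprecise_copula_def by blast
  have boundary: "grounded A" "grounded B" "neutral1 A" "neutral1 B"
    using assms(1) unfolding imprecise_copula_def by auto
  have "A (s, 0) = 0" "A (s', 0) = 0" "A (0, s) = 0" "A (0, s') = 0"
    "B (s, 0) = 0" "B (s', 0) = 0" "B (0, s) = 0" "B (0, s') = 0"
    "A (s, 1) = s" "A (s', 1) = s'" "A (1, s) = s" "A (1, s') = s'"
    "B (s, 1) = s" "B (s', 1) = s'" "B (1, s) = s" "B (1, s') = s'"
    using boundary assms(3,4) unfolding grounded_def neutral1_def by auto
  moreover note rect[of s s' 0 t] rect[of s s' t 1] rect[of 0 t s s'] rect[of t 1 s s']
  moreover have "0 \<le> s" "s \<le> s'" "s' \<le> 1" "0 \<le> t" "t \<le> 1"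
    using assms(3-6) by auto
  ultimately have "0 \<le> A (s', t) - A (s, t) \<and> A (s', t) - A (s, t) \<le> s' - s"
    "0 \<le> A (t, s') - A (t, s) \<and> A (t, s') - A (t, s) \<le> s' - s"
    "0 \<le> B (s', t) - B (s, t) \<and> B (s', t) - B (s, t) \<le> s' - s"
    "0 \<le> B (t, s') - B (t, s) \<and> B (t, s') - B (t, s) \<le> s' - s"
    by linarith+
  then show "0 \<le> F (s', t) - F (s, t) \<and> F (s', t) - F (s, t) \<le> s' - s"
    and "0 \<le> F (t, s') - F (t, s) \<and> F (t, s') - F (t, s) \<le> s' - s"
    using assms(2) by auto
qed

lemma imprecise_copula_lipschitz:
  assumes "imprecise_copula A B" "F \<in> {A, B}"
  shows "2-lipschitz_on unit_sq F"
proof (rule lipschitz_onI)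
  fix x y assume "x \<in> unit_sq" "y \<in> unit_sq"
  then obtain x1 x2 y1 y2 where eq: "x = (x1, x2)" "y = (y1, y2)"
    and mem: "x1 \<in> {0..1}" "x2 \<in> {0..1}" "y1 \<in> {0..1}" "y2 \<in> {0..1}"
    by (cases x, cases y) (auto simp: mem_unit_sq)
  note inc = imprecise_copula_increments[OF assms]
  have "\<bar>F (x1, x2) - F (y1, x2)\<bar> \<le> \<bar>x1 - y1\<bar>"
    using inc(1)[of x1 y1 x2] inc(1)[of y1 x1 x2] mem by (cases "x1 \<le> y1") auto
  moreover have "\<bar>F (y1, x2) - F (y1, y2)\<bar> \<le> \<bar>x2 - y2\<bar>"
    using inc(2)[of x2 y2 y1] inc(2)[of y2 x2 y1] mem by (cases "x2 \<le> y2") auto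
  moreover have "\<bar>x1 - y1\<bar> \<le> dist x y" "\<bar>x2 - y2\<bar> \<le> dist x y"
    using dist_fst_le[of x y] dist_snd_le[of x y] by (simp_all add: eq dist_real_def)
  ultimately show "dist (F x) (F y) \<le> 2 * dist x y"
    by (simp add: eq dist_real_def)
qed simp

lemma compact_unit_sq: "compact unit_sq"
  unfolding unit_sq_def by (intro compact_Times compact_Icc)

lemma uniform_limit_lipschitz:
  fixes f :: "nat \<Rightarrow> 'a::metric_space \<Rightarrow> 'b::metric_space"
  assumes "compact S" and lip: "\<And>n. L-lipschitz_on S (f n)" "L-lipschitz_on S g"
    and lim: "\<And>x. x \<in> S \<Longrightarrow> (\<lambda>n. f n x) \<longlonglongrightarrow> g x"
  shows "uniform_limit S f g sequentially"
proof (rule uniform_limitI)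
  fix e :: real assume "0 < e"
  have "0 \<le> L"
    by (rule lipschitz_on_nonneg[OF lip(2)])
  define d where "d = e / (3 * (L + 1))"
  have "0 < d" "L * d \<le> e / 3"
    using \<open>0 < e\<close> \<open>0 \<le> L\<close> by (auto simp: d_def field_simps)
  obtain K where K: "K \<subseteq> S" "finite K" "S \<subseteq> (\<Union>k\<in>K. ball k d)"
    using compactE_image[OF \<open>compact S\<close>, of S "\<lambda>k. ball k d"] \<open>0 < d\<close> by force
  have "\<forall>\<^sub>F n in sequentially. \<forall>k\<in>K. dist (f n k) (g k) < e / 3"
    using K \<open>0 < e\<close> lim by (intro eventually_ball_finite ballI tendstoD) auto
  then show "\<forall>\<^sub>F n in sequentially. \<forall>x\<in>S. dist (f n x) (g x) < e"
  proof (rule eventually_mono, intro ballI)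
    fix n x assume near: "\<forall>k\<in>K. dist (f n k) (g k) < e / 3" and "x \<in> S"
    then obtain k where "k \<in> K" "dist x k < d"
      using K by (auto simp: dist_commute)
    then have "k \<in> S" "L * dist x k \<le> L * d"
      using K(1) \<open>0 \<le> L\<close> by (auto intro: mult_left_mono)
    then have "dist (f n x) (f n k) \<le> L * d" "dist (g k) (g x) \<le> L * d"
      using lipschitz_onD[OF lip(1) \<open>x \<in> S\<close>, of k n] lipschitz_onD[OF lip(2) \<open>k \<in> S\<close> \<open>x \<in> S\<close>]
      by (simp_all add: dist_commute)
    moreover have "dist (f n k) (g k) < e / 3"
      using near \<open>k \<in> K\<close> by blast
    moreover have "dist (f n x) (g x) \<le> dist (f n x) (f n k) + dist (f n k) (g k) + dist (g k) (g x)"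
      using dist_triangle[of "f n x" "g x" "f n k"] dist_triangle[of "f n k" "g x" "g k"] by linarith
    ultimately show "dist (f n x) (g x) < e"
      using \<open>L * d \<le> e / 3\<close> by linarith
  qed
qed

lemma imprecise_copula_limit:
  assumes ic: "\<And>n. imprecise_copula (a n) (b n)"
    and lim_a: "\<And>x. x \<in> unit_sq \<Longrightarrow> (\<lambda>n. a n x) \<longlonglongrightarrow> A x"
    and lim_b: "\<And>x. x \<in> unit_sq \<Longrightarrow> (\<lambda>n. b n x) \<longlonglongrightarrow> B x"
  shows "imprecise_copula A B"
proof -
  have const: "A x = c \<and> B x = c" if "x \<in> unit_sq" "\<And>n. a n x = c \<and> b n x = c" for x c
    using LIMSEQ_unique[OF lim_a[OF that(1)]] LIMSEQ_unique[OF lim_b[OF that(1)]] that(2)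
    by simp
  have nonneg: "0 \<le> u + v - w - z"
    if "U \<longlonglongrightarrow> u" "V \<longlonglongrightarrow> v" "W \<longlonglongrightarrow> w" "Z \<longlonglongrightarrow> z" "\<And>n. 0 \<le> U n + V n - W n - Z n"
    for U V W Z :: "nat \<Rightarrow> real" and u v w z
    using that by (intro LIMSEQ_le_const[where X = "\<lambda>n. U n + V n - W n - Z n"] tendsto_diff tendsto_add) auto
  have "grounded (a n) \<and> grounded (b n) \<and> neutral1 (a n) \<and> neutral1 (b n)" for n
    using ic unfolding imprecise_copula_def by blast
  then have "grounded A \<and> grounded B \<and> neutral1 A \<and> neutral1 B"
    unfolding grounded_def neutral1_def using const by (auto simp: mem_unit_sq)
  moreover have "A (s1, t1) + B (s2, t2) - A (s2, t1) - A (s1, t2) \<ge> 0 \<and>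
      B (s1, t1) + A (s2, t2) - A (s2, t1) - A (s1, t2) \<ge> 0 \<and>
      B (s1, t1) + B (s2, t2) - B (s2, t1) - A (s1, t2) \<ge> 0 \<and>
      B (s1, t1) + B (s2, t2) - A (s2, t1) - B (s1, t2) \<ge> 0"
    if "0 \<le> s1" "s1 \<le> s2" "s2 \<le> 1" "0 \<le> t1" "t1 \<le> t2" "t2 \<le> 1" for s1 s2 t1 t2
  proof -
    have "(s1, t1) \<in> unit_sq" "(s2, t2) \<in> unit_sq" "(s2, t1) \<in> unit_sq" "(s1, t2) \<in> unit_sq"
      using that by (auto simp: mem_unit_sq)
    note lims = this[THEN lim_a] this[THEN lim_b]
    have "a n (s1, t1) + b n (s2, t2) - a n (s2, t1) - a n (s1, t2) \<ge> 0 \<and>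
      b n (s1, t1) + a n (s2, t2) - a n (s2, t1) - a n (s1, t2) \<ge> 0 \<and>
      b n (s1, t1) + b n (s2, t2) - b n (s2, t1) - a n (s1, t2) \<ge> 0 \<and>
      b n (s1, t1) + b n (s2, t2) - a n (s2, t1) - b n (s1, t2) \<ge> 0" for n
      using ic[of n] that unfolding imprecise_copula_def by blast
    then show ?thesis
      by (intro conjI nonneg[OF lims(1,6,3,4)] nonneg[OF lims(5,2,3,4)]
          nonneg[OF lims(5,6,7,4)] nonneg[OF lims(5,6,3,8)]) blast+
  qed
  ultimately show ?thesis
    unfolding imprecise_copula_def by blast
qed

lemma cross_le_cross_add:
  assumes "x \<in> unit_sq" "p \<in> unit_sq" "\<And>y. y \<in> unit_sq \<Longrightarrow> \<bar>F y - G y\<bar> \<le> d"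
  shows "cross F x p \<le> cross G x p + 3 * d" "cross G x p \<le> cross F x p + 3 * d"
proof -
  have "(fst p, snd x) \<in> unit_sq" "(fst x, snd p) \<in> unit_sq"
    using assms(1,2) by (auto simp: mem_unit_sq)
  then have "\<bar>F (fst p, snd x) - G (fst p, snd x)\<bar> \<le> d" "\<bar>F (fst x, snd p) - G (fst x, snd p)\<bar> \<le> d"
    "\<bar>F p - G p\<bar> \<le> d"
    using assms by auto
  then show "cross F x p \<le> cross G x p + 3 * d" "cross G x p \<le> cross F x p + 3 * d"
    unfolding cross_def by linarith+
qed

lemma M_op_uniform_limit_ge:
  assumes lim: "uniform_limit unit_sq F G sequentially" and "conc_cross_le G H" "x \<in> unit_sq"
    and le: "\<forall>\<^sub>F n in sequentially. c \<le> M_op (F n) x"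
  shows "c \<le> M_op G x"
proof (rule field_le_epsilon)
  fix e :: real assume "0 < e"
  then have "\<forall>\<^sub>F n in sequentially. \<forall>y\<in>unit_sq. dist (F n y) (G y) < e / 3"
    using uniform_limitD[OF lim, of "e / 3"] by simp
  then obtain n where close: "\<forall>y\<in>unit_sq. dist (F n y) (G y) < e / 3" and "c \<le> M_op (F n) x"
    using eventually_happens'[OF trivial_limit_sequentially eventually_conj[OF _ le]] by blast
  moreover have "M_op (F n) x \<le> M_op G x + e"
  proof (rule M_op_le[OF \<open>x \<in> unit_sq\<close>])
    fix p assume "p \<in> unit_sq" "concordant x p"
    moreover have "cross G x p \<le> H x" if "p \<in> unit_sq" "concordant x p" for p
      using assms(2,3) that unfolding conc_cross_le_def by blast
    ultimately have "cross G x p \<le> M_op G x"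
      using cross_le_M_op[OF \<open>x \<in> unit_sq\<close>] by blast
    moreover have "cross (F n) x p \<le> cross G x p + 3 * (e / 3)"
      using close \<open>p \<in> unit_sq\<close> \<open>x \<in> unit_sq\<close>
      by (intro cross_le_cross_add) (auto simp: dist_real_def less_imp_le)
    ultimately show "cross (F n) x p \<le> M_op G x + e"
      by simp
  qed
  ultimately show "c \<le> M_op G x + e"
    by linarith
qed

lemma O_op_uniform_limit_le:
  assumes lim: "uniform_limit unit_sq F G sequentially" and "disc_cross_ge G H" "x \<in> unit_sq"
    and le: "\<forall>\<^sub>F n in sequentially. O_op (F n) x \<le> c"
  shows "O_op G x \<le> c"
proof (rule field_le_epsilon)
  fix e :: real assume "0 < e"
  then have "\<forall>\<^sub>F n in sequentially. \<forall>y\<in>unit_sq. dist (F n y) (G y) < e / 3"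
    using uniform_limitD[OF lim, of "e / 3"] by simp
  then obtain n where close: "\<forall>y\<in>unit_sq. dist (F n y) (G y) < e / 3" and "O_op (F n) x \<le> c"
    using eventually_happens'[OF trivial_limit_sequentially eventually_conj[OF _ le]] by blast
  moreover have "O_op G x - e \<le> O_op (F n) x"
  proof (rule le_O_op[OF \<open>x \<in> unit_sq\<close>])
    fix p assume "p \<in> unit_sq" "discordant x p"
    moreover have "H x \<le> cross G x p" if "p \<in> unit_sq" "discordant x p" for p
      using assms(2,3) that unfolding disc_cross_ge_def by blast
    ultimately have "O_op G x \<le> cross G x p"
      using O_op_le_cross[OF \<open>x \<in> unit_sq\<close>] by blast
    moreover have "cross G x p \<le> cross (F n) x p + 3 * (e / 3)"
      using close \<open>p \<in> unit_sq\<close> \<open>x \<in> unit_sq\<close>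
      by (intro cross_le_cross_add) (auto simp: dist_real_def less_imp_le)
    ultimately show "O_op G x - e \<le> cross (F n) x p"
      by simp
  qed
  ultimately show "O_op G x \<le> c + e"
    by linarith
qed

section \<open>The iteration\<close>

lemma seqAB_simps [simp]:
  "seqA A B 0 = A" "seqB A B 0 = B"
  "seqB A B (Suc n) = M_op (seqA A B n)" "seqA A B (Suc n) = O_op (M_op (seqA A B n))"
  by (simp_all add: seqA_def seqB_def Let_def)

lemma imprecise_copula_seq:
  assumes "imprecise_copula A B"
  shows "imprecise_copula (seqA A B n) (seqB A B n)"
proof (induction n)
  case 0
  show ?case
    using assms by simp
next
  case (Suc n)
  show ?case
    using imprecise_copula_O_op[OF imprecise_copula_M_op[OF Suc.IH]] by simp
qed

lemma seq_mono:
  assumes "imprecise_copula A B" "x \<in> unit_sq"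
  shows "seqA A B n x \<le> seqA A B (Suc n) x" "seqB A B (Suc n) x \<le> seqB A B n x"
proof -
  have ic: "imprecise_copula (seqA A B n) (seqB A B n)"
    by (rule imprecise_copula_seq[OF assms(1)])
  then have "disc_cross_ge (seqB A B (Suc n)) (seqA A B n)"
    using imprecise_copula_M_op[OF ic] by (simp add: imprecise_copula_iff_cross)
  then show "seqA A B n x \<le> seqA A B (Suc n) x"
    using disc_cross_ge_O_op_bounds(1)[OF _ assms(2)] by simp
  show "seqB A B (Suc n) x \<le> seqB A B n x"
    using ic conc_cross_le_M_op_bounds(2)[OF _ assms(2)] by (simp add: imprecise_copula_iff_cross)
qed

lemma seq_limits:
  assumes "imprecise_copula A B"
  obtains Ab Bb where
    "\<And>x. x \<in> unit_sq \<Longrightarrow> (\<lambda>n. seqA A B n x) \<longlonglongrightarrow> Ab x"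
    "\<And>x. x \<in> unit_sq \<Longrightarrow> (\<lambda>n. seqB A B n x) \<longlonglongrightarrow> Bb x"
    "\<And>n x. x \<in> unit_sq \<Longrightarrow> seqA A B n x \<le> Ab x \<and> Bb x \<le> seqB A B n x"
proof -
  define Ab where "Ab x = (SUP n. seqA A B n x)" for x
  define Bb where "Bb x = (INF n. seqB A B n x)" for x
  have conv: "incseq (\<lambda>n. seqA A B n x) \<and> (\<lambda>n. seqA A B n x) \<longlonglongrightarrow> Ab x \<and>
      decseq (\<lambda>n. seqB A B n x) \<and> (\<lambda>n. seqB A B n x) \<longlonglongrightarrow> Bb x"
    if x: "x \<in> unit_sq" for x
  proof -
    have inc: "incseq (\<lambda>n. seqA A B n x)" and dec: "decseq (\<lambda>n. seqB A B n x)"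
      using seq_mono[OF assms x] by (auto intro: incseq_SucI decseq_SucI)
    have "seqA A B n x \<le> seqB A B 0 x" "seqA A B 0 x \<le> seqB A B n x" for n
      using incseqD[OF inc, of 0 n] decseqD[OF dec, of 0 n]
        imprecise_copula_le[OF imprecise_copula_seq[OF assms] x, of n] by simp_all
    then have "bdd_above (range (\<lambda>n. seqA A B n x))" "bdd_below (range (\<lambda>n. seqB A B n x))"
      by (intro bdd_aboveI2 bdd_belowI2; blast)+
    then show ?thesis
      unfolding Ab_def Bb_def using inc dec by (simp add: LIMSEQ_incseq_SUP LIMSEQ_decseq_INF)
  qed
  show ?thesis
  proof
    show "(\<lambda>n. seqA A B n x) \<longlonglongrightarrow> Ab x" "(\<lambda>n. seqB A B n x) \<longlonglongrightarrow> Bb x"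
      if "x \<in> unit_sq" for x
      using conv[OF that] by simp_all
    show "seqA A B n x \<le> Ab x \<and> Bb x \<le> seqB A B n x" if "x \<in> unit_sq" for n x
      using conv[OF that] incseq_le decseq_ge by blast
  qed
qed

lemma seq_limit_fixed_point:
  assumes unif: "uniform_limit unit_sq (seqA A B) Ab sequentially"
    "uniform_limit unit_sq (seqB A B) Bb sequentially"
    and "imprecise_copula Ab Bb"
    and bounds: "\<And>n. seqA A B n x \<le> Ab x \<and> Bb x \<le> seqB A B n x"
    and x: "x \<in> unit_sq"
  shows "M_op Ab x = Bb x \<and> O_op Bb x = Ab x"
proof -
  have cross_lim: "conc_cross_le Ab Bb" "disc_cross_ge Bb Ab"
    using assms(3) by (simp_all add: imprecise_copula_iff_cross)
  have "Bb x \<le> M_op Ab x"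
    using bounds[of "Suc _"]
    by (intro M_op_uniform_limit_ge[OF unif(1) cross_lim(1) x] always_eventually) simp
  moreover have "\<forall>\<^sub>F n in sequentially. O_op (seqB A B n) x \<le> Ab x"
    unfolding eventually_sequentially
  proof (intro exI[of _ 1] allI impI)
    fix n :: nat assume "1 \<le> n"
    then obtain m where "n = Suc m"
      using Suc_le_D by auto
    then show "O_op (seqB A B n) x \<le> Ab x"
      using bounds[of n] by simp
  qed
  then have "O_op Bb x \<le> Ab x"
    by (rule O_op_uniform_limit_le[OF unif(2) cross_lim(2) x])
  ultimately show ?thesis
    using conc_cross_le_M_op_bounds(2)[OF cross_lim(1) x]
      disc_cross_ge_O_op_bounds(1)[OF cross_lim(2) x] by linarith
qed

theorem mainTheorem9:
  fixes A B :: sqfun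
  assumes "imprecise_copula A B"
  shows "(\<forall>n. \<forall>x\<in>unit_sq. seqA A B n x \<le> seqA A B (Suc n) x \<and>
                           seqB A B (Suc n) x \<le> seqB A B n x)
    \<and> (\<forall>n\<ge>1. imprecise_copula (seqA A B n) (seqB A B n) \<and>
          (\<forall>x\<in>unit_sq. seqA A B (n - 1) x \<le> seqA A B n x \<and> seqA A B n x \<le> seqB A B n x \<and>
                         seqB A B n x \<le> seqB A B (n - 1) x))
    \<and> (\<exists>Ab Bb :: sqfun.
          uniform_limit unit_sq (seqA A B) Ab sequentially \<and>
          uniform_limit unit_sq (seqB A B) Bb sequentially \<and>
          imprecise_copula Ab Bb \<and>
          (\<forall>n. \<forall>x\<in>unit_sq. seqA A B n x \<le> Ab x \<and> Ab x \<le> Bb x \<and> Bb x \<le> seqB A B n x) \<and>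
          (\<forall>x\<in>unit_sq. M_op Ab x = Bb x \<and> O_op Bb x = Ab x))"
proof -
  note ic = imprecise_copula_seq[OF assms] and mono = seq_mono[OF assms]
  obtain Ab Bb where lim_a: "\<And>x. x \<in> unit_sq \<Longrightarrow> (\<lambda>n. seqA A B n x) \<longlonglongrightarrow> Ab x"
    and lim_b: "\<And>x. x \<in> unit_sq \<Longrightarrow> (\<lambda>n. seqB A B n x) \<longlonglongrightarrow> Bb x"
    and bounds: "\<And>n x. x \<in> unit_sq \<Longrightarrow> seqA A B n x \<le> Ab x \<and> Bb x \<le> seqB A B n x"
    using seq_limits[OF assms] by blast
  have ic_lim: "imprecise_copula Ab Bb"
    using ic lim_a lim_b by (rule imprecise_copula_limit)
  have unif: "uniform_limit unit_sq (seqA A B) Ab sequentially"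
    "uniform_limit unit_sq (seqB A B) Bb sequentially"
    using imprecise_copula_lipschitz[OF ic] imprecise_copula_lipschitz[OF ic_lim] lim_a lim_b
    by (auto intro!: uniform_limit_lipschitz[OF compact_unit_sq])
  have "M_op Ab x = Bb x \<and> O_op Bb x = Ab x" if "x \<in> unit_sq" for x
    using unif ic_lim bounds[OF that] that by (rule seq_limit_fixed_point)
  moreover have "seqA A B (n - 1) x \<le> seqA A B n x \<and> seqB A B n x \<le> seqB A B (n - 1) x"
    if "1 \<le> n" "x \<in> unit_sq" for n x
    using mono[OF that(2), of "n - 1"] that(1) by simp
  ultimately show ?thesis
    using ic mono unif ic_lim bounds imprecise_copula_le[OF ic] imprecise_copula_le[OF ic_lim]
    by blast
qed

end
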